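(* Let $\nu$ be a fixed order, $a<b$, $f,g\in C^\infty[a,b]$ with $g(x)\ne0$ and $g'(x)\neq0$ on $[a,b]$, and $\mathcal{H}_\nu[f]=\int_a^bf(x)J_\nu(\omega g(x))\,dx$. Let $\varphi_k(x)=g'(x)g(x)^k$. Let $a=x_0<x_1<\dots<x_d=b$ be distinct nodes with positive integer multiplicities $m_0,\dots,m_d$, $n=\sum_{k=0}^dm_k$, and let $p=\sum_{k=0}^{n-1}c_k\varphi_k$ be the unique function in the span of $\varphi_0,\dots,\varphi_{n-1}$ with $p^{(j-1)}(x_k)=f^{(j-1)}(x_k)$ for $j=1,\dots,m_k$, $k=0,\dots,d$. Define $Q^F[f]=\mathcal{H}_\nu[p]$. If $m_0\ge m$ and $m_d\ge m$ for an integer $m\ge1$, then $\mathcal{H}_\nu[f]-Q^F[f]=\mathcal{O}(\omega^{-m-3/2})$ as $\omega\to\infty$.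
   Context: $J_\nu$ is the Bessel function of the first kind of order $\nu$. Existence and uniqueness of the interpolant $p$ holds since the span of $\varphi_0,\dots,\varphi_{n-1}$ is an extended Chebyshev space. *)

theory Defs
  imports "HOL-Analysis.Analysis" "HOL-Library.Landau_Symbols"
begin

text \<open>Bessel function of the first kind of (real) order nu, principal branch:
  J_nu(z) = (z/2)^nu * sum_k (-1)^k (z/2)^(2k) / (k! Gamma(k+nu+1)),
  written with the reciprocal Gamma function rGamma (so that it is also
  correct for negative integer orders).\<close>
definition bessel_J :: "real \<Rightarrow> complex \<Rightarrow> complex" where
  "bessel_J nu z =
     (z / 2) powr (complex_of_real nu) *
     (\<Sum>k. (-1) ^ k * rGamma (of_nat k + complex_of_real nu + 1) / fact k * (z / 2) ^ (2 * k))"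

text \<open>D is a family of successive derivatives on S: D (Suc k) is the derivative
  of D k at every point of S (one-sided at endpoints, i.e. within S).
  "D 0 = f on [a,b] and smooth_derivs D {a..b}" expresses f in C^infinity[a,b].\<close>
definition smooth_derivs :: "(nat \<Rightarrow> real \<Rightarrow> real) \<Rightarrow> real set \<Rightarrow> bool" where
  "smooth_derivs D S \<longleftrightarrow>
     (\<forall>k. \<forall>x\<in>S. (D k has_real_derivative D (Suc k) x) (at x within S))"

definition bessel_H :: "real \<Rightarrow> real \<Rightarrow> real \<Rightarrow> (real \<Rightarrow> real) \<Rightarrow> (real \<Rightarrow> real) \<Rightarrow> real \<Rightarrow> complex" where
  "bessel_H nu a b g f \<omega> =
     integral {a..b} (\<lambda>x. complex_of_real (f x) * bessel_J nu (complex_of_real (\<omega> * g x)))"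

end

theory Submission
  imports Defs
begin

text \<open>On \<open>[a, b]\<close> the function \<open>g\<close> has a constant sign \<open>\<epsilon>\<close>, so with \<open>G = \<epsilon> g > 0\<close> the error
  \<open>H\<^sub>\<nu>[f] - Q\<^sup>F[f]\<close> is, up to a unimodular factor, \<open>\<integral> e(x) J\<^sub>\<nu>(\<omega> G(x)) dx\<close> with \<open>e = f - p\<close>.
  Only the interpolation conditions at the two endpoints matter: they make \<open>e\<close> and its first
  \<open>m - 1\<close> derivatives vanish at \<open>a\<close> and \<open>b\<close>. Because
  \<open>(J\<^sub>\<mu>\<^sub>+\<^sub>1(\<omega>G))' = \<omega> G' J\<^sub>\<mu>(\<omega>G) - (\<mu> + 1) G'/G J\<^sub>\<mu>\<^sub>+\<^sub>1(\<omega>G)\<close>, an integration by parts against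
  \<open>e/G'\<close> trades \<open>J\<^sub>\<mu>\<close> for \<open>J\<^sub>\<mu>\<^sub>+\<^sub>1\<close> and gains a factor \<open>\<omega>\<^sup>-\<^sup>1\<close>, with boundary terms that vanish as long
  as \<open>e\<close> does at the ends. After \<open>m\<close> such steps one more step leaves boundary terms and an integral
  that are \<open>O(\<omega>\<^sup>-\<^sup>1\<^sup>/\<^sup>2)\<close>, since \<open>J\<^sub>\<mu>(t) = O(t\<^sup>-\<^sup>1\<^sup>/\<^sup>2)\<close>; in total the error is \<open>O(\<omega>\<^sup>-\<^sup>m\<^sup>-\<^sup>3\<^sup>/\<^sup>2)\<close>.\<close>

section \<open>Bessel functions of positive real argument\<close>

definition bessel_coeff :: "real \<Rightarrow> nat \<Rightarrow> real" where
  "bessel_coeff mu k = (-1) ^ k * rGamma (real k + mu + 1) / fact k"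

definition bessel_series :: "real \<Rightarrow> real \<Rightarrow> real" where
  "bessel_series mu u = (\<Sum>k. bessel_coeff mu k * u ^ k)"

text \<open>The Bessel function \<open>J\<^sub>\<mu>\<close> on the positive reals; for \<open>t \<le> 0\<close> the value is junk.\<close>
definition bessel_Jr :: "real \<Rightarrow> real \<Rightarrow> real" where
  "bessel_Jr mu t = (t / 2) powr mu * bessel_series mu (t\<^sup>2 / 4)"

lemma summable_bessel_series: "summable (\<lambda>k. bessel_coeff mu k * u ^ k)"
proof (rule summable_ratio_test[where c = "1/2" and N = "nat \<lceil>2 * \<bar>u\<bar> + \<bar>mu\<bar>\<rceil> + 1"])
  fix n assume "nat \<lceil>2 * \<bar>u\<bar> + \<bar>mu\<bar>\<rceil> + 1 \<le> n"
  then have n: "real n + mu + 1 \<ge> 2 * \<bar>u\<bar> + 1" by linarith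
  then have z: "real n + mu + 1 \<noteq> 0" by linarith
  define q where "q = - u / ((real n + 1) * (real n + mu + 1))"
  have rg: "rGamma (real (Suc n) + mu + 1) = rGamma (real n + mu + 1) / (real n + mu + 1)"
    using rGamma_plus1[of "real n + mu + 1"] z by (simp add: field_simps add_ac)
  have step: "bessel_coeff mu (Suc n) * u ^ Suc n = (bessel_coeff mu n * u ^ n) * q"
    unfolding bessel_coeff_def rg q_def using z by (simp add: field_simps)
  have "(real n + 1) * (real n + mu + 1) \<ge> 1 * (2 * \<bar>u\<bar> + 1)"
    by (intro mult_mono) (use n in auto)
  then have "\<bar>q\<bar> \<le> 1/2"
    unfolding q_def using n by (simp add: abs_divide field_simps)
  then have "norm (bessel_coeff mu n * u ^ n) * \<bar>q\<bar> \<le> norm (bessel_coeff mu n * u ^ n) * (1/2)"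
    by (intro mult_left_mono) auto
  then show "norm (bessel_coeff mu (Suc n) * u ^ Suc n) \<le> 1/2 * norm (bessel_coeff mu n * u ^ n)"
    unfolding step by (simp add: abs_mult)
qed simp

lemma diffs_bessel_coeff: "diffs (bessel_coeff mu) = (\<lambda>k. - bessel_coeff (mu + 1) k)"
proof
  fix k
  have e: "real (Suc k) + mu + 1 = real k + (mu + 1) + 1" by simp
  show "diffs (bessel_coeff mu) k = - bessel_coeff (mu + 1) k"
    unfolding diffs_def bessel_coeff_def e by (simp add: field_simps del: of_nat_Suc)
qed

lemma bessel_series_has_derivative:
  "(bessel_series mu has_real_derivative - bessel_series (mu + 1) u) (at u)"
proof -
  have "(bessel_series mu has_real_derivative (\<Sum>n. diffs (bessel_coeff mu) n * u^n)) (at u)"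
    unfolding bessel_series_def[abs_def]
    by (rule termdiffs_strong_converges_everywhere) (rule summable_bessel_series)
  also have "(\<Sum>n. diffs (bessel_coeff mu) n * u^n) = - bessel_series (mu + 1) u"
    unfolding diffs_bessel_coeff bessel_series_def
    using summable_bessel_series by (simp add: suminf_minus[symmetric])
  finally show ?thesis .
qed

lemma bessel_coeff_plus1: "bessel_coeff mu k = (real k + mu + 1) * bessel_coeff (mu + 1) k"
proof -
  have "(real k + mu + 1) * rGamma (real k + mu + 1 + 1) = rGamma (real k + mu + 1)"
    by (rule rGamma_plus1)
  moreover have "real k + mu + 1 + 1 = real k + (mu + 1) + 1" by simp
  ultimately show ?thesis unfolding bessel_coeff_def by (simp add: field_simps)
qed

lemma bessel_series_recurrence:
  "bessel_series mu u = (mu + 1) * bessel_series (mu + 1) u - u * bessel_series (mu + 2) u"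
proof -
  define c where "c = bessel_coeff (mu + 1)"
  have s1: "(\<lambda>k. (mu + 1) * (c k * u ^ k)) sums ((mu + 1) * bessel_series (mu + 1) u)"
    unfolding bessel_series_def c_def by (intro sums_mult summable_sums summable_bessel_series)
  have "diffs c = (\<lambda>k. - bessel_coeff (mu + 2) k)"
    unfolding c_def diffs_bessel_coeff by (simp add: add.assoc)
  then have "(\<lambda>j. u * (diffs c j * u ^ j)) sums (u * (- bessel_series (mu + 2) u))"
    unfolding bessel_series_def using summable_bessel_series[of "mu + 2" u]
    by (intro sums_mult) (simp add: summable_sums sums_minus)
  moreover have "(\<lambda>j. u * (diffs c j * u ^ j)) = (\<lambda>j. real (Suc j) * (c (Suc j) * u ^ Suc j))"
    by (auto simp: diffs_def)
  ultimately have "(\<lambda>k. real k * (c k * u ^ k)) sums (u * (- bessel_series (mu + 2) u))"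
    using sums_Suc_iff[of "\<lambda>k. real k * (c k * u ^ k)"] by simp
  from sums_add[OF s1 this]
  have "(\<lambda>k. bessel_coeff mu k * u ^ k) sums
          ((mu + 1) * bessel_series (mu + 1) u - u * bessel_series (mu + 2) u)"
    by (simp add: bessel_coeff_plus1[of mu] c_def algebra_simps)
  then show ?thesis unfolding bessel_series_def[of mu] by (simp add: sums_iff)
qed

lemma bessel_Jr_has_derivative:
  assumes "t > 0"
  shows "(bessel_Jr mu has_real_derivative (mu / t * bessel_Jr mu t - bessel_Jr (mu + 1) t)) (at t)"
proof -
  have d1: "((\<lambda>t. (t / 2) powr mu) has_real_derivative mu * (t / 2) powr (mu - 1) * (1/2)) (at t)"
    using assms by (auto intro!: derivative_eq_intros)
  have d2: "((\<lambda>t. bessel_series mu (t\<^sup>2 / 4)) has_real_derivative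
              - bessel_series (mu + 1) (t\<^sup>2 / 4) * (2 * t / 4)) (at t)"
    by (rule DERIV_chain2[OF bessel_series_has_derivative]) (auto intro!: derivative_eq_intros)
  have deriv: "(bessel_Jr mu has_real_derivative
          mu * (t / 2) powr (mu - 1) * (1/2) * bessel_series mu (t\<^sup>2 / 4)
          + - bessel_series (mu + 1) (t\<^sup>2 / 4) * (2 * t / 4) * (t / 2) powr mu) (at t)"
    unfolding bessel_Jr_def[abs_def] by (rule DERIV_mult[OF d1 d2])
  have p1: "(t / 2) powr (mu - 1) = (t / 2) powr mu / (t / 2)"
    and p2: "(t / 2) powr (mu + 1) = (t / 2) powr mu * (t / 2)"
    using assms by (simp_all add: powr_diff powr_add)
  have "mu * (t / 2) powr (mu - 1) * (1/2) * bessel_series mu (t\<^sup>2 / 4)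
      + - bessel_series (mu + 1) (t\<^sup>2 / 4) * (2 * t / 4) * (t / 2) powr mu
      = mu / t * bessel_Jr mu t - bessel_Jr (mu + 1) t"
    unfolding bessel_Jr_def p1 p2 using assms by (simp add: field_simps)
  with deriv show ?thesis by simp
qed

lemma bessel_Jr_recurrence:
  assumes "t > 0"
  shows "bessel_Jr mu t + bessel_Jr (mu + 2) t = 2 * (mu + 1) / t * bessel_Jr (mu + 1) t"
proof -
  have p1: "(t / 2) powr (mu + 1) = (t / 2) powr mu * (t / 2)"
    and p2: "(t / 2) powr (mu + 2) = (t / 2) powr mu * (t / 2)\<^sup>2"
    using assms by (simp_all add: powr_add power2_eq_square)
  define P where "P = (t / 2) powr mu"
  define u where "u = t\<^sup>2 / 4"
  have u: "u = (t / 2)\<^sup>2" unfolding u_def by (simp add: power2_eq_square)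
  have "P * bessel_series mu u + P * (t / 2)\<^sup>2 * bessel_series (mu + 2) u
        = P * ((mu + 1) * bessel_series (mu + 1) u)"
    unfolding u[symmetric] by (simp add: bessel_series_recurrence[of mu u] algebra_simps)
  also have "\<dots> = 2 * (mu + 1) / t * (P * (t / 2) * bessel_series (mu + 1) u)"
    using assms by (simp add: field_simps)
  finally show ?thesis unfolding bessel_Jr_def p1 p2 P_def[symmetric] u_def[symmetric]
    by (simp add: algebra_simps)
qed

lemma bessel_Jr_Suc_has_derivative:
  assumes "t > 0"
  shows "(bessel_Jr (mu + 1) has_real_derivative (bessel_Jr mu t - (mu + 1) / t * bessel_Jr (mu + 1) t)) (at t)"
proof -
  have "bessel_Jr (mu + 1 + 1) t = 2 * (mu + 1) / t * bessel_Jr (mu + 1) t - bessel_Jr mu t"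
    using bessel_Jr_recurrence[OF assms, of mu] by (simp add: add.assoc)
  then have "(mu + 1) / t * bessel_Jr (mu + 1) t - bessel_Jr (mu + 1 + 1) t
      = bessel_Jr mu t - (mu + 1) / t * bessel_Jr (mu + 1) t"
    by (simp add: field_simps)
  then show ?thesis using bessel_Jr_has_derivative[OF assms, of "mu + 1"] by metis
qed

lemma continuous_on_bessel_Jr: "continuous_on {0<..} (bessel_Jr mu)"
  using bessel_Jr_has_derivative
  by (intro continuous_at_imp_continuous_on) (auto intro: DERIV_isCont)

section \<open>Decay of \<open>J\<^sub>\<mu>(t)\<close> as \<open>t \<rightarrow> \<infinity>\<close>\<close>

text \<open>Its derivative is \<open>(2\<mu> + 1)/t \<cdot> J\<^sub>\<mu> J\<^sub>\<mu>\<^sub>+\<^sub>1\<close>, so for large \<open>t\<close> the energy times \<open>e\<^sup>|\<^sup>2\<^sup>\<mu>\<^sup>+\<^sup>1\<^sup>|\<^sup>/\<^sup>t\<close> is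
  nonincreasing; as the energy dominates \<open>t (J\<^sub>\<mu>\<^sup>2 + J\<^sub>\<mu>\<^sub>+\<^sub>1\<^sup>2) / 2\<close> there, \<open>J\<^sub>\<mu>(t) = O(t\<^sup>-\<^sup>1\<^sup>/\<^sup>2)\<close>.\<close>
definition bessel_energy :: "real \<Rightarrow> real \<Rightarrow> real" where
  "bessel_energy mu t = t * ((bessel_Jr mu t)\<^sup>2 + (bessel_Jr (mu + 1) t)\<^sup>2)
     - (2 * mu + 1) * (bessel_Jr mu t * bessel_Jr (mu + 1) t)"

lemma bessel_energy_has_derivative:
  assumes t: "t > 0"
  shows "(bessel_energy mu has_real_derivative
           (2 * mu + 1) / t * (bessel_Jr mu t * bessel_Jr (mu + 1) t)) (at t)"
proof -
  define P where "P = bessel_Jr mu"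
  define Q where "Q = bessel_Jr (mu + 1)"
  have "(bessel_energy mu has_real_derivative
        1 * ((P t)\<^sup>2 + (Q t)\<^sup>2) + t * (2 * P t * (mu / t * P t - Q t) + 2 * Q t * (P t - (mu + 1) / t * Q t))
        - (2 * mu + 1) * ((mu / t * P t - Q t) * Q t + P t * (P t - (mu + 1) / t * Q t))) (at t)"
    unfolding bessel_energy_def[abs_def] P_def Q_def
    by (rule derivative_eq_intros bessel_Jr_has_derivative[OF t] bessel_Jr_Suc_has_derivative[OF t] refl)+
       (auto simp: algebra_simps)
  moreover have "1 * ((P t)\<^sup>2 + (Q t)\<^sup>2) + t * (2 * P t * (mu / t * P t - Q t) + 2 * Q t * (P t - (mu + 1) / t * Q t))
        - (2 * mu + 1) * ((mu / t * P t - Q t) * Q t + P t * (P t - (mu + 1) / t * Q t))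
      = (2 * mu + 1) / t * (P t * Q t)"
    using t by (simp add: field_simps power2_eq_square)
  ultimately show ?thesis unfolding P_def Q_def by simp
qed

lemma abs_mult_le_sum_squares: "\<bar>c * (x * y)\<bar> \<le> \<bar>c\<bar> * (x\<^sup>2 + y\<^sup>2) / 2" for c x y :: real
proof -
  have "0 \<le> (\<bar>x\<bar> - \<bar>y\<bar>)\<^sup>2" by simp
  then have "2 * \<bar>x * y\<bar> \<le> x\<^sup>2 + y\<^sup>2" by (simp add: power2_eq_square algebra_simps abs_mult)
  from mult_left_mono[OF this abs_ge_zero[of c]] show ?thesis by (simp add: abs_mult)
qed

lemma bessel_energy_lower_bound:
  assumes "t \<ge> \<bar>2 * mu + 1\<bar>"
  shows "bessel_energy mu t \<ge> t * ((bessel_Jr mu t)\<^sup>2 + (bessel_Jr (mu + 1) t)\<^sup>2) / 2"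
proof -
  let ?S = "(bessel_Jr mu t)\<^sup>2 + (bessel_Jr (mu + 1) t)\<^sup>2"
  have "(2 * mu + 1) * (bessel_Jr mu t * bessel_Jr (mu + 1) t) \<le> \<bar>2 * mu + 1\<bar> * ?S / 2"
    using abs_mult_le_sum_squares[of "2 * mu + 1"] abs_ge_self order_trans by blast
  also have "\<dots> \<le> t * ?S / 2"
    by (intro divide_right_mono mult_right_mono assms) auto
  finally show ?thesis unfolding bessel_energy_def by simp
qed

lemma bessel_energy_weighted_antimono:
  fixes mu :: real
  defines "k \<equiv> \<bar>2 * mu + 1\<bar>"
  assumes "max 1 k \<le> s" "s \<le> t"
  shows "bessel_energy mu t * exp (k / t) \<le> bessel_energy mu s * exp (k / s)"
proof (rule DERIV_nonpos_imp_nonincreasing[OF assms(3)])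
  fix r assume r: "s \<le> r" "r \<le> t"
  then have r0: "r > 0" and rk: "r \<ge> k" using assms(2) by auto
  let ?P = "bessel_Jr mu r" and ?Q = "bessel_Jr (mu + 1) r"
  have "((\<lambda>r. exp (k / r)) has_real_derivative exp (k / r) * (- k / r\<^sup>2)) (at r)"
    using r0 by (auto intro!: derivative_eq_intros simp: power2_eq_square field_simps)
  from DERIV_mult[OF bessel_energy_has_derivative[OF r0, of mu] this]
  have "((\<lambda>r. bessel_energy mu r * exp (k / r)) has_real_derivative
      (2 * mu + 1) / r * (?P * ?Q) * exp (k / r) + exp (k / r) * (- k / r\<^sup>2) * bessel_energy mu r) (at r)" .
  moreover have "(2 * mu + 1) / r * (?P * ?Q) \<le> bessel_energy mu r * (k / r\<^sup>2)"
  proof -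
    have PQ: "(2 * mu + 1) * (?P * ?Q) \<le> k * (?P\<^sup>2 + ?Q\<^sup>2) / 2"
      unfolding k_def using abs_mult_le_sum_squares[of "2 * mu + 1"] abs_ge_self order_trans by blast
    have "(2 * mu + 1) / r * (?P * ?Q) = (2 * mu + 1) * (?P * ?Q) / r" by simp
    also have "\<dots> \<le> k * (?P\<^sup>2 + ?Q\<^sup>2) / 2 / r"
      by (rule divide_right_mono) (use r0 PQ in auto)
    also have "\<dots> = (r * (?P\<^sup>2 + ?Q\<^sup>2) / 2) * (k / r\<^sup>2)"
      using r0 by (simp add: field_simps power2_eq_square)
    also have "\<dots> \<le> bessel_energy mu r * (k / r\<^sup>2)"
      using bessel_energy_lower_bound[of mu r] rk unfolding k_def
      by (intro mult_right_mono) auto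
    finally show ?thesis .
  qed
  then have "((2 * mu + 1) / r * (?P * ?Q) - bessel_energy mu r * (k / r\<^sup>2)) * exp (k / r) \<le> 0"
    by (simp add: mult_nonpos_nonneg)
  then have "(2 * mu + 1) / r * (?P * ?Q) * exp (k / r)
      + exp (k / r) * (- k / r\<^sup>2) * bessel_energy mu r \<le> 0"
    by (simp add: algebra_simps)
  ultimately show "\<exists>y. ((\<lambda>r. bessel_energy mu r * exp (k / r)) has_real_derivative y) (at r) \<and> y \<le> 0"
    by blast
qed

lemma bessel_Jr_decay: "\<exists>C. \<forall>t\<ge>max 1 \<bar>2 * mu + 1\<bar>. \<bar>bessel_Jr mu t\<bar> \<le> C / sqrt t"
proof -
  define k where "k = \<bar>2 * mu + 1\<bar>"
  define T where "T = max 1 k"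
  define C where "C = sqrt (2 * (bessel_energy mu T * exp (k / T)))"
  have "\<bar>bessel_Jr mu t\<bar> \<le> C / sqrt t" if t: "t \<ge> T" for t
  proof -
    let ?S = "(bessel_Jr mu t)\<^sup>2 + (bessel_Jr (mu + 1) t)\<^sup>2"
    have t0: "t > 0" and tk: "t \<ge> k" using t by (auto simp: T_def)
    have E: "t * ?S / 2 \<le> bessel_energy mu t"
      using bessel_energy_lower_bound[of mu t] tk by (simp add: k_def)
    moreover have "0 \<le> t * ?S / 2" using t0 by simp
    ultimately have "bessel_energy mu t \<ge> 0" by linarith
    moreover have "1 \<le> exp (k / t)" using t0 by (simp add: k_def)
    ultimately have "bessel_energy mu t \<le> bessel_energy mu t * exp (k / t)"
      using mult_left_mono[of 1 "exp (k / t)" "bessel_energy mu t"] by simp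
    also have "\<dots> \<le> bessel_energy mu T * exp (k / T)"
      using bessel_energy_weighted_antimono[of mu T t] t unfolding T_def k_def by simp
    finally have "t * ?S \<le> 2 * (bessel_energy mu T * exp (k / T))"
      using E by simp
    moreover have "0 \<le> t * ?S" using t0 by simp
    ultimately have "t * ?S \<le> C\<^sup>2" and C0: "C \<ge> 0"
      unfolding C_def by simp_all
    moreover have "t * (bessel_Jr mu t)\<^sup>2 \<le> t * ?S"
      using t0 by (intro mult_left_mono) auto
    ultimately have "t * (bessel_Jr mu t)\<^sup>2 \<le> C\<^sup>2" by linarith
    then have "(bessel_Jr mu t)\<^sup>2 \<le> (C / sqrt t)\<^sup>2"
      using t0 by (simp add: power_divide field_simps)
    then show ?thesis
      using power2_le_imp_le[of "\<bar>bessel_Jr mu t\<bar>" "C / sqrt t"] C0 t0 by simp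
  qed
  then show ?thesis unfolding T_def k_def by blast
qed

lemma bessel_Jr_uniform_decay:
  assumes g0: "g0 > 0" and G: "\<forall>x\<in>S. G x \<ge> g0"
  shows "\<exists>C. \<forall>\<^sub>F \<omega> in at_top. \<forall>x\<in>S. \<bar>bessel_Jr mu (\<omega> * G x)\<bar> \<le> C * \<omega> powr (-1/2)"
proof -
  define T where "T = max 1 \<bar>2 * mu + 1\<bar>"
  obtain C where C: "\<forall>t\<ge>T. \<bar>bessel_Jr mu t\<bar> \<le> C / sqrt t"
    using bessel_Jr_decay unfolding T_def by blast
  have T: "T > 0" unfolding T_def by simp
  have "0 \<le> C / sqrt T" using C[rule_format, of T] by linarith
  then have C0: "C \<ge> 0" using T by (simp add: zero_le_divide_iff)
  have "\<bar>bessel_Jr mu (\<omega> * G x)\<bar> \<le> C / sqrt g0 * \<omega> powr (-1/2)"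
    if \<omega>: "\<omega> \<ge> T / g0" and x: "x \<in> S" for \<omega> x
  proof -
    have "T / g0 > 0" using T g0 by simp
    then have \<omega>0: "\<omega> > 0" using \<omega> by linarith
    have Gx: "G x \<ge> g0" using G x by auto
    have "\<omega> * G x \<ge> \<omega> * g0" using Gx \<omega>0 by simp
    moreover have "\<omega> * g0 \<ge> T" using \<omega> g0 by (simp add: field_simps)
    ultimately have "\<bar>bessel_Jr mu (\<omega> * G x)\<bar> \<le> C / sqrt (\<omega> * G x)" using C by simp
    also have "\<dots> \<le> C / sqrt (\<omega> * g0)"
      using \<open>\<omega> * G x \<ge> \<omega> * g0\<close> \<omega>0 g0 C0
      by (intro divide_left_mono real_sqrt_le_mono) auto
    also have "\<dots> = C / sqrt g0 * \<omega> powr (-1/2)"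
      using \<omega>0 g0 by (simp add: powr_minus_divide powr_half_sqrt real_sqrt_mult)
    finally show ?thesis .
  qed
  then show ?thesis unfolding eventually_at_top_linorder by blast
qed

lemma continuous_on_bessel_Jr_comp:
  assumes "continuous_on S G" "\<forall>x\<in>S. G x > 0" "\<omega> > 0"
  shows "continuous_on S (\<lambda>x. bessel_Jr mu (\<omega> * G x))"
  by (rule continuous_on_compose2[OF continuous_on_bessel_Jr])
     (use assms in \<open>auto intro: continuous_on_mult_left\<close>)

lemma bessel_integral_bigo_sqrt:
  fixes a b :: real
  assumes "a \<le> b" "\<forall>x\<in>{a..b}. G x > 0"
    and "continuous_on {a..b} G" "continuous_on {a..b} h"
  shows "(\<lambda>\<omega>. integral {a..b} (\<lambda>x. h x * bessel_Jr mu (\<omega> * G x))) \<in> O(\<lambda>\<omega>. \<omega> powr (-1/2))"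
proof -
  obtain x0 where "x0 \<in> {a..b}" "\<forall>y\<in>{a..b}. G x0 \<le> G y"
    using continuous_attains_inf[OF compact_Icc _ assms(3)] assms(1) by auto
  then have "G x0 > 0" "\<forall>y\<in>{a..b}. G y \<ge> G x0" using assms(2) by auto
  then obtain C where C: "\<forall>\<^sub>F \<omega> in at_top. \<forall>x\<in>{a..b}. \<bar>bessel_Jr mu (\<omega> * G x)\<bar> \<le> C * \<omega> powr (-1/2)"
    using bessel_Jr_uniform_decay by blast
  have "bounded (h ` {a..b})"
    by (intro compact_imp_bounded compact_continuous_image assms(4)) auto
  then obtain M where M: "\<forall>x\<in>{a..b}. \<bar>h x\<bar> \<le> M"
    unfolding bounded_iff by auto
  have "\<forall>\<^sub>F \<omega> in at_top. norm (integral {a..b} (\<lambda>x. h x * bessel_Jr mu (\<omega> * G x)))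
          \<le> M * C * (b - a) * norm (\<omega> powr (-1/2))"
    using C eventually_gt_at_top[of 0]
  proof eventually_elim
    case (elim \<omega>)
    have "norm (integral {a..b} (\<lambda>x. h x * bessel_Jr mu (\<omega> * G x))) \<le> M * (C * \<omega> powr (-1/2)) * (b - a)"
    proof (rule integral_bound[OF assms(1)])
      show "continuous_on {a..b} (\<lambda>x. h x * bessel_Jr mu (\<omega> * G x))"
        using assms elim by (intro continuous_on_mult continuous_on_bessel_Jr_comp) auto
      show "norm (h x * bessel_Jr mu (\<omega> * G x)) \<le> M * (C * \<omega> powr (-1/2))" if "x \<in> {a..b}" for x
        unfolding real_norm_def abs_mult using M elim that by (intro mult_mono) auto
    qed
    then show ?case by (simp add: mult_ac)
  qed
  then show ?thesis by (rule bigoI)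
qed

text \<open>For \<open>s < 0\<close> the principal branch gives \<open>(s/2)\<^sup>\<nu> = e\<^sup>i\<^sup>\<pi>\<^sup>\<nu> (|s|/2)\<^sup>\<nu>\<close>.\<close>
definition bessel_J_sign :: "real \<Rightarrow> real \<Rightarrow> complex" where
  "bessel_J_sign nu s = (if s < 0 then exp (\<i> * pi * nu) else 1)"

lemma bessel_J_of_real:
  assumes s: "s \<noteq> 0"
  shows "bessel_J nu (complex_of_real s) = bessel_J_sign nu s * complex_of_real (bessel_Jr nu \<bar>s\<bar>)"
proof -
  have "(\<lambda>k. (-1) ^ k * rGamma (of_nat k + complex_of_real nu + 1) / fact k * (complex_of_real s / 2) ^ (2 * k))
      = (\<lambda>k. complex_of_real (bessel_coeff nu k * (\<bar>s\<bar>\<^sup>2 / 4) ^ k))"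
  proof
    fix k
    have "rGamma (of_nat k + complex_of_real nu + 1) = complex_of_real (rGamma (real k + nu + 1))"
      using rGamma_complex_of_real[of "real k + nu + 1"] by simp
    moreover have "(complex_of_real s / 2) ^ (2 * k) = complex_of_real ((\<bar>s\<bar>\<^sup>2 / 4) ^ k)"
      by (simp add: power_mult power2_eq_square power_divide)
    ultimately show "(-1) ^ k * rGamma (of_nat k + complex_of_real nu + 1) / fact k * (complex_of_real s / 2) ^ (2 * k)
        = complex_of_real (bessel_coeff nu k * (\<bar>s\<bar>\<^sup>2 / 4) ^ k)"
      unfolding bessel_coeff_def by simp
  qed
  then have "(\<Sum>k. (-1) ^ k * rGamma (of_nat k + complex_of_real nu + 1) / fact k * (complex_of_real s / 2) ^ (2 * k))
      = complex_of_real (bessel_series nu (\<bar>s\<bar>\<^sup>2 / 4))"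
    unfolding bessel_series_def by (simp add: suminf_of_real[OF summable_bessel_series])
  moreover have "(complex_of_real s / 2) powr complex_of_real nu
      = bessel_J_sign nu s * complex_of_real ((\<bar>s\<bar> / 2) powr nu)"
    using powr_of_real_if[of "s / 2" nu] unfolding bessel_J_sign_def by (auto simp: mult.commute)
  ultimately show ?thesis unfolding bessel_J_def bessel_Jr_def by simp
qed

lemma bessel_H_eq_bessel_Jr_integral:
  assumes \<omega>: "\<omega> > 0" and \<epsilon>: "\<epsilon> = 1 \<or> \<epsilon> = -1" and g_pos: "\<forall>x\<in>{a..b}. \<epsilon> * g x > 0"
    and "continuous_on {a..b} g" "continuous_on {a..b} f"
  shows "bessel_H nu a b g f \<omega> =
    bessel_J_sign nu \<epsilon> * complex_of_real (integral {a..b} (\<lambda>x. f x * bessel_Jr nu (\<omega> * (\<epsilon> * g x))))"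
proof -
  have J: "bessel_J nu (complex_of_real (\<omega> * g x)) = bessel_J_sign nu \<epsilon> * complex_of_real (bessel_Jr nu (\<omega> * (\<epsilon> * g x)))"
    if x: "x \<in> {a..b}" for x
  proof -
    have "\<epsilon> * g x > 0" using g_pos x by auto
    then have "\<bar>\<omega> * g x\<bar> = \<omega> * (\<epsilon> * g x)" and "(\<omega> * g x < 0) = (\<epsilon> < 0)"
      using \<omega> \<epsilon> by (auto simp: abs_mult mult_less_0_iff zero_less_mult_iff)
    moreover have "\<omega> * g x \<noteq> 0" using \<open>\<epsilon> * g x > 0\<close> \<omega> by auto
    ultimately show ?thesis using bessel_J_of_real[of "\<omega> * g x" nu] unfolding bessel_J_sign_def by simp
  qed
  have "continuous_on {a..b} (\<lambda>x. f x * bessel_Jr nu (\<omega> * (\<epsilon> * g x)))"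
    using assms by (intro continuous_on_mult continuous_on_bessel_Jr_comp continuous_on_mult_left) auto
  then have "((\<lambda>x. bessel_J_sign nu \<epsilon> * complex_of_real (f x * bessel_Jr nu (\<omega> * (\<epsilon> * g x)))) has_integral
      bessel_J_sign nu \<epsilon> * complex_of_real (integral {a..b} (\<lambda>x. f x * bessel_Jr nu (\<omega> * (\<epsilon> * g x))))) {a..b}"
    by (intro has_integral_mult_right has_integral_of_real integrable_integral integrable_continuous_interval)
  moreover have "bessel_J_sign nu \<epsilon> * complex_of_real (f x * bessel_Jr nu (\<omega> * (\<epsilon> * g x)))
      = complex_of_real (f x) * bessel_J nu (complex_of_real (\<omega> * g x))" if "x \<in> {a..b}" for x
    using J[OF that] by simp
  ultimately show ?thesis
    unfolding bessel_H_def by (intro integral_unique) (rule has_integral_eq)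
qed

lemma norm_bessel_J_sign: "norm (bessel_J_sign nu s) = 1"
  unfolding bessel_J_sign_def by (simp add: norm_exp_eq_Re)

lemma norm_bessel_H_diff:
  assumes "\<omega> > 0" "\<epsilon> = 1 \<or> \<epsilon> = -1" "\<forall>x\<in>{a..b}. \<epsilon> * g x > 0"
    and "continuous_on {a..b} g" "continuous_on {a..b} f" "continuous_on {a..b} p"
  shows "norm (bessel_H nu a b g f \<omega> - bessel_H nu a b g p \<omega>) =
    \<bar>integral {a..b} (\<lambda>x. (f x - p x) * bessel_Jr nu (\<omega> * (\<epsilon> * g x)))\<bar>"
proof -
  have "continuous_on {a..b} (\<lambda>x. q x * bessel_Jr nu (\<omega> * (\<epsilon> * g x)))"
    if "continuous_on {a..b} q" for q
    using assms that by (intro continuous_on_mult continuous_on_bessel_Jr_comp continuous_on_mult_left) auto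
  then have "integral {a..b} (\<lambda>x. (f x - p x) * bessel_Jr nu (\<omega> * (\<epsilon> * g x))) =
      integral {a..b} (\<lambda>x. f x * bessel_Jr nu (\<omega> * (\<epsilon> * g x)))
      - integral {a..b} (\<lambda>x. p x * bessel_Jr nu (\<omega> * (\<epsilon> * g x)))"
    using assms(5,6) by (simp add: left_diff_distrib integral_diff integrable_continuous_interval)
  then have "bessel_H nu a b g f \<omega> - bessel_H nu a b g p \<omega> = bessel_J_sign nu \<epsilon> *
      complex_of_real (integral {a..b} (\<lambda>x. (f x - p x) * bessel_Jr nu (\<omega> * (\<epsilon> * g x))))"
    unfolding bessel_H_eq_bessel_Jr_integral[OF assms(1-5)]
      bessel_H_eq_bessel_Jr_integral[OF assms(1-4,6)]
    by (simp add: right_diff_distrib)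
  then show ?thesis by (simp add: norm_mult norm_bessel_J_sign)
qed

section \<open>Functions flat at the endpoints\<close>

fun Ck_flat :: "real \<Rightarrow> real \<Rightarrow> nat \<Rightarrow> nat \<Rightarrow> (real \<Rightarrow> real) \<Rightarrow> bool" where
  "Ck_flat a b 0 m h \<longleftrightarrow> continuous_on {a..b} h \<and> (0 < m \<longrightarrow> h a = 0 \<and> h b = 0)"
| "Ck_flat a b (Suc n) m h \<longleftrightarrow>
     (\<exists>h'. (\<forall>x\<in>{a..b}. (h has_real_derivative h' x) (at x within {a..b})) \<and> Ck_flat a b n (m - 1) h')
     \<and> (0 < m \<longrightarrow> h a = 0 \<and> h b = 0)"

lemma has_real_derivative_within_imp_continuous_on:
  assumes "\<forall>x\<in>S. (h has_real_derivative h' x) (at x within S)"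
  shows "continuous_on S h"
  unfolding continuous_on_eq_continuous_within using assms by (auto intro: DERIV_continuous)

lemma Ck_flat_continuous_on: "Ck_flat a b n m h \<Longrightarrow> continuous_on {a..b} h"
  by (cases n) (auto intro: has_real_derivative_within_imp_continuous_on)

lemma Ck_flat_vanishes: "Ck_flat a b n m h \<Longrightarrow> 0 < m \<Longrightarrow> h a = 0 \<and> h b = 0"
  by (cases n) auto

lemma Ck_flat_SucD: "Ck_flat a b (Suc n) m h \<Longrightarrow> Ck_flat a b n m h"
proof (induction n arbitrary: m h)
  case 0
  then show ?case by (auto intro: has_real_derivative_within_imp_continuous_on)
next
  case (Suc n)
  then obtain h' where "\<forall>x\<in>{a..b}. (h has_real_derivative h' x) (at x within {a..b})"
    "Ck_flat a b (Suc n) (m - 1) h'" "0 < m \<longrightarrow> h a = 0 \<and> h b = 0" by auto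
  moreover from Suc.IH[OF this(2)] have "Ck_flat a b n (m - 1) h'" .
  ultimately show ?case by auto
qed

lemma Ck_flat_mono: "m' \<le> m \<Longrightarrow> Ck_flat a b n m h \<Longrightarrow> Ck_flat a b n m' h"
proof (induction n arbitrary: m m' h)
  case (Suc n)
  then obtain h' where "\<forall>x\<in>{a..b}. (h has_real_derivative h' x) (at x within {a..b})"
    "Ck_flat a b n (m - 1) h'" "0 < m \<longrightarrow> h a = 0 \<and> h b = 0" by auto
  with Suc.IH[of "m' - 1" "m - 1"] Suc.prems(1) show ?case by auto
qed auto

lemma Ck_flat_lincomb:
  "Ck_flat a b n m h1 \<Longrightarrow> Ck_flat a b n m h2 \<Longrightarrow> Ck_flat a b n m (\<lambda>x. c1 * h1 x + c2 * h2 x)"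
proof (induction n arbitrary: m h1 h2)
  case 0
  then show ?case by (auto intro!: continuous_on_add continuous_on_mult_left)
next
  case (Suc n)
  from Suc.prems(1) obtain h1' where h1': "\<forall>x\<in>{a..b}. (h1 has_real_derivative h1' x) (at x within {a..b})"
    "Ck_flat a b n (m - 1) h1'" and v1: "0 < m \<longrightarrow> h1 a = 0 \<and> h1 b = 0" by auto
  from Suc.prems(2) obtain h2' where h2': "\<forall>x\<in>{a..b}. (h2 has_real_derivative h2' x) (at x within {a..b})"
    "Ck_flat a b n (m - 1) h2'" and v2: "0 < m \<longrightarrow> h2 a = 0 \<and> h2 b = 0" by auto
  have "\<forall>x\<in>{a..b}. ((\<lambda>x. c1 * h1 x + c2 * h2 x) has_real_derivative c1 * h1' x + c2 * h2' x) (at x within {a..b})"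
    using h1'(1) h2'(1) by (auto intro!: derivative_eq_intros)
  moreover have "Ck_flat a b n (m - 1) (\<lambda>x. c1 * h1' x + c2 * h2' x)" by (rule Suc.IH[OF h1'(2) h2'(2)])
  ultimately show ?case using v1 v2 by auto
qed

lemma Ck_flat_diff: "Ck_flat a b n m h1 \<Longrightarrow> Ck_flat a b n m h2 \<Longrightarrow> Ck_flat a b n m (\<lambda>x. h1 x - h2 x)"
  using Ck_flat_lincomb[of a b n m h1 h2 1 "-1"] by simp

lemma Ck_flat_cmult: "Ck_flat a b n m h \<Longrightarrow> Ck_flat a b n m (\<lambda>x. c * h x)"
  using Ck_flat_lincomb[of a b n m h h c 0] by simp

lemma Ck_flat_mult: "Ck_flat a b n m h \<Longrightarrow> Ck_flat a b n 0 q \<Longrightarrow> Ck_flat a b n m (\<lambda>x. h x * q x)"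
proof (induction n arbitrary: m h q)
  case 0
  then show ?case by (auto intro: continuous_on_mult)
next
  case (Suc n)
  from Suc.prems(1) obtain h' where h': "\<forall>x\<in>{a..b}. (h has_real_derivative h' x) (at x within {a..b})"
    "Ck_flat a b n (m - 1) h'" and v: "0 < m \<longrightarrow> h a = 0 \<and> h b = 0" by auto
  from Suc.prems(2) obtain q' where q': "\<forall>x\<in>{a..b}. (q has_real_derivative q' x) (at x within {a..b})"
    "Ck_flat a b n 0 q'" by auto
  have "\<forall>x\<in>{a..b}. ((\<lambda>x. h x * q x) has_real_derivative 1 * (h' x * q x) + 1 * (h x * q' x)) (at x within {a..b})"
    using h'(1) q'(1) by (auto intro!: derivative_eq_intros)
  moreover have "Ck_flat a b n (m - 1) (\<lambda>x. 1 * (h' x * q x) + 1 * (h x * q' x))"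
  proof (rule Ck_flat_lincomb)
    show "Ck_flat a b n (m - 1) (\<lambda>x. h' x * q x)"
      by (rule Suc.IH[OF h'(2) Ck_flat_SucD[OF Suc.prems(2)]])
    have "Ck_flat a b n (m - 1) h" by (rule Ck_flat_mono[OF _ Ck_flat_SucD[OF Suc.prems(1)]]) simp
    then show "Ck_flat a b n (m - 1) (\<lambda>x. h x * q' x)"
      by (rule Suc.IH[OF _ q'(2)])
  qed
  ultimately show ?case using v by auto
qed

lemma Ck_flat_inverse:
  assumes "\<forall>x\<in>{a..b}. G x \<noteq> 0"
  shows "Ck_flat a b n 0 G \<Longrightarrow> Ck_flat a b n 0 (\<lambda>x. 1 / G x)"
proof (induction n)
  case 0
  then have "continuous_on {a..b} (\<lambda>x. 1 / G x)"
    using assms by (intro continuous_on_divide continuous_on_const) auto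
  then show ?case by simp
next
  case (Suc n)
  from Suc.prems obtain G' where G': "\<forall>x\<in>{a..b}. (G has_real_derivative G' x) (at x within {a..b})"
    "Ck_flat a b n 0 G'" by auto
  have "((\<lambda>x. 1 / G x) has_real_derivative (-1) * ((G' x * (1 / G x)) * (1 / G x))) (at x within {a..b})"
    if x: "x \<in> {a..b}" for x
  proof -
    have "((\<lambda>x. 1 / G x) has_real_derivative (0 * G x - 1 * G' x) / (G x * G x)) (at x within {a..b})"
      by (rule DERIV_divide[OF DERIV_const G'(1)[rule_format, OF x]]) (use assms x in auto)
    then show ?thesis using assms x by simp
  qed
  moreover have "Ck_flat a b n 0 (\<lambda>x. (-1) * ((G' x * (1 / G x)) * (1 / G x)))"
    using Suc.IH[OF Ck_flat_SucD[OF Suc.prems]]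
    by (intro Ck_flat_cmult Ck_flat_mult[OF Ck_flat_mult[OF G'(2)]])
  ultimately show ?case
    unfolding Ck_flat.simps(2) by (intro conjI exI[of _ "\<lambda>x. (-1) * ((G' x * (1 / G x)) * (1 / G x))"]) auto
qed

lemma smooth_derivs_Suc: "smooth_derivs D S \<Longrightarrow> smooth_derivs (\<lambda>k. D (Suc k)) S"
  unfolding smooth_derivs_def by auto

lemma smooth_derivs_continuous_on: "smooth_derivs D S \<Longrightarrow> continuous_on S (D k)"
  unfolding smooth_derivs_def by (auto intro: has_real_derivative_within_imp_continuous_on)

lemma smooth_derivs_diff:
  "smooth_derivs D S \<Longrightarrow> smooth_derivs E S \<Longrightarrow> smooth_derivs (\<lambda>k x. D k x - E k x) S"
  unfolding smooth_derivs_def by (auto intro: DERIV_diff)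

lemma smooth_derivs_imp_Ck_flat:
  "smooth_derivs D {a..b} \<Longrightarrow> \<forall>i<m. D i a = 0 \<and> D i b = 0 \<Longrightarrow> Ck_flat a b n m (D 0)"
proof (induction n arbitrary: D m)
  case 0
  then show ?case by (auto intro: smooth_derivs_continuous_on)
next
  case (Suc n)
  have "Ck_flat a b n (m - 1) (D 1)"
    using Suc.IH[OF smooth_derivs_Suc[OF Suc.prems(1)], of "m - 1"] Suc.prems(2) by auto
  moreover have "\<forall>x\<in>{a..b}. (D 0 has_real_derivative D 1 x) (at x within {a..b})"
    using Suc.prems(1) unfolding smooth_derivs_def by auto
  ultimately show ?case using Suc.prems(2) by auto
qed

section \<open>Repeated integration by parts\<close>

text \<open>The derivative of \<open>v J\<^sub>\<mu>\<^sub>+\<^sub>1(\<omega>G)\<close> is \<open>\<omega> h J\<^sub>\<mu>(\<omega>G) - h\<^sub>1 J\<^sub>\<mu>\<^sub>+\<^sub>1(\<omega>G)\<close>.\<close>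
lemma bessel_integral_by_parts:
  fixes a b \<omega> mu :: real and v v' G G' h h1 :: "real \<Rightarrow> real"
  assumes "a \<le> b" and \<omega>: "\<omega> > 0"
    and G_pos: "\<forall>x\<in>{a..b}. G x > 0"
    and G_deriv: "\<forall>x\<in>{a..b}. (G has_real_derivative G' x) (at x within {a..b})"
    and v_deriv: "\<forall>x\<in>{a..b}. (v has_real_derivative v' x) (at x within {a..b})"
    and h: "\<forall>x\<in>{a..b}. h x = v x * G' x"
    and h1: "\<forall>x\<in>{a..b}. h1 x = (mu + 1) * v x * G' x / G x - v' x"
    and h1_cont: "continuous_on {a..b} h1"
  shows "integral {a..b} (\<lambda>x. h x * bessel_Jr mu (\<omega> * G x)) =
    (v b * bessel_Jr (mu + 1) (\<omega> * G b) - v a * bessel_Jr (mu + 1) (\<omega> * G a)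
     + integral {a..b} (\<lambda>x. h1 x * bessel_Jr (mu + 1) (\<omega> * G x))) / \<omega>"
proof -
  define w where "w x = bessel_Jr (mu + 1) (\<omega> * G x)" for x
  have w_deriv: "\<forall>x\<in>{a..b}. (w has_real_derivative
      (bessel_Jr mu (\<omega> * G x) - (mu + 1) / (\<omega> * G x) * w x) * (\<omega> * G' x)) (at x within {a..b})"
  proof
    fix x assume x: "x \<in> {a..b}"
    then have "\<omega> * G x > 0" using G_pos \<omega> by auto
    from DERIV_chain2[OF bessel_Jr_Suc_has_derivative[OF this, of mu] DERIV_cmult[OF G_deriv[rule_format, OF x]]]
    show "(w has_real_derivative
      (bessel_Jr mu (\<omega> * G x) - (mu + 1) / (\<omega> * G x) * w x) * (\<omega> * G' x)) (at x within {a..b})"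
      unfolding w_def .
  qed
  have "((\<lambda>x. v x * w x) has_vector_derivative \<omega> * (h x * bessel_Jr mu (\<omega> * G x)) - h1 x * w x)
      (at x within {a..b})" if x: "x \<in> {a..b}" for x
  proof -
    have "((\<lambda>x. v x * w x) has_real_derivative
        v' x * w x + (bessel_Jr mu (\<omega> * G x) - (mu + 1) / (\<omega> * G x) * w x) * (\<omega> * G' x) * v x)
        (at x within {a..b})"
      using DERIV_mult[OF v_deriv[rule_format, OF x] w_deriv[rule_format, OF x]] .
    moreover have "v' x * w x + (bessel_Jr mu (\<omega> * G x) - (mu + 1) / (\<omega> * G x) * w x) * (\<omega> * G' x) * v x
        = \<omega> * (h x * bessel_Jr mu (\<omega> * G x)) - h1 x * w x"
    proof -
      have "G x > 0" using G_pos x by auto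
      then show ?thesis
        using \<omega> by (simp only: h[rule_format, OF x] h1[rule_format, OF x]) (simp add: field_simps)
    qed
    ultimately show ?thesis by (simp add: has_real_derivative_iff_has_vector_derivative)
  qed
  then have ftc: "((\<lambda>x. \<omega> * (h x * bessel_Jr mu (\<omega> * G x)) - h1 x * w x) has_integral
      v b * w b - v a * w a) {a..b}"
    by (intro fundamental_theorem_of_calculus[OF \<open>a \<le> b\<close>])
  have "continuous_on {a..b} w"
    by (rule has_real_derivative_within_imp_continuous_on[OF w_deriv])
  then have "((\<lambda>x. h1 x * w x) has_integral integral {a..b} (\<lambda>x. h1 x * w x)) {a..b}"
    using h1_cont by (intro integrable_integral integrable_continuous_interval continuous_on_mult)
  from has_integral_add[OF ftc this]
  have "((\<lambda>x. \<omega> * (h x * bessel_Jr mu (\<omega> * G x))) has_integral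
      v b * w b - v a * w a + integral {a..b} (\<lambda>x. h1 x * w x)) {a..b}"
    by simp
  then have "((\<lambda>x. h x * bessel_Jr mu (\<omega> * G x)) has_integral
      (v b * w b - v a * w a + integral {a..b} (\<lambda>x. h1 x * w x)) / \<omega>) {a..b}"
    by (subst (asm) has_integral_mult_right_iff) (use \<omega> in auto)
  then show ?thesis unfolding w_def by (rule integral_unique)
qed

lemma bessel_integral_reduction:
  fixes a b :: real
  assumes "a < b"
    and G_pos: "\<forall>x\<in>{a..b}. G x > 0"
    and G_deriv: "\<forall>x\<in>{a..b}. (G has_real_derivative G' x) (at x within {a..b})"
    and G'_nz: "\<forall>x\<in>{a..b}. G' x \<noteq> 0"
    and G_smooth: "\<And>n. Ck_flat a b n 0 G" and G'_smooth: "\<And>n. Ck_flat a b n 0 G'"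
    and h: "Ck_flat a b (Suc n) m h"
  obtains v h1 where "Ck_flat a b n (m - 1) h1" and "0 < m \<Longrightarrow> v a = 0 \<and> v b = 0"
    and "\<And>\<omega>. \<omega> > 0 \<Longrightarrow> integral {a..b} (\<lambda>x. h x * bessel_Jr mu (\<omega> * G x)) =
      (v b * bessel_Jr (mu + 1) (\<omega> * G b) - v a * bessel_Jr (mu + 1) (\<omega> * G a)
       + integral {a..b} (\<lambda>x. h1 x * bessel_Jr (mu + 1) (\<omega> * G x))) / \<omega>"
proof -
  define v where "v x = h x * (1 / G' x)" for x
  have "Ck_flat a b (Suc n) m v"
    unfolding v_def by (rule Ck_flat_mult[OF h Ck_flat_inverse[OF G'_nz G'_smooth]])
  then obtain v' where v_deriv: "\<forall>x\<in>{a..b}. (v has_real_derivative v' x) (at x within {a..b})"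
    and v': "Ck_flat a b n (m - 1) v'" by auto
  define h1 where "h1 x = (mu + 1) * (h x * (1 / G x)) - v' x" for x
  have G_nz: "\<forall>x\<in>{a..b}. G x \<noteq> 0" using G_pos by auto
  have "Ck_flat a b n (m - 1) h"
    by (rule Ck_flat_mono[OF _ Ck_flat_SucD[OF h]]) simp
  then have h1_flat: "Ck_flat a b n (m - 1) h1"
    unfolding h1_def
    by (intro Ck_flat_diff[OF Ck_flat_cmult[OF Ck_flat_mult[OF _ Ck_flat_inverse[OF G_nz G_smooth]]] v'])
  show ?thesis
  proof (rule that[OF h1_flat])
    show "v a = 0 \<and> v b = 0" if "0 < m" using Ck_flat_vanishes[OF h that] unfolding v_def by simp
    show "integral {a..b} (\<lambda>x. h x * bessel_Jr mu (\<omega> * G x)) =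
      (v b * bessel_Jr (mu + 1) (\<omega> * G b) - v a * bessel_Jr (mu + 1) (\<omega> * G a)
       + integral {a..b} (\<lambda>x. h1 x * bessel_Jr (mu + 1) (\<omega> * G x))) / \<omega>" if "\<omega> > 0" for \<omega>
    proof (rule bessel_integral_by_parts[OF _ that G_pos G_deriv v_deriv])
      show "\<forall>x\<in>{a..b}. h x = v x * G' x" and "\<forall>x\<in>{a..b}. h1 x = (mu + 1) * v x * G' x / G x - v' x"
        using G'_nz unfolding v_def h1_def by auto
    qed (use \<open>a < b\<close> Ck_flat_continuous_on[OF h1_flat] in auto)
  qed
qed

lemma bigo_divide_powr:
  fixes f :: "real \<Rightarrow> real"
  assumes "f \<in> O(\<lambda>\<omega>. \<omega> powr e)"
  shows "(\<lambda>\<omega>. f \<omega> / \<omega>) \<in> O(\<lambda>\<omega>. \<omega> powr (e - 1))"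
proof -
  have "\<forall>\<^sub>F \<omega> in at_top. inverse \<omega> * \<omega> powr e = \<omega> powr (e - 1)"
    using eventually_gt_at_top[of 0] by eventually_elim (simp add: powr_diff divide_inverse)
  then have "O(\<lambda>\<omega>. inverse \<omega> * \<omega> powr e) = O(\<lambda>\<omega>. \<omega> powr (e - 1))"
    by (rule landau_o.big.cong)
  moreover have "(\<lambda>\<omega>. inverse \<omega> * f \<omega>) \<in> O(\<lambda>\<omega>. inverse \<omega> * \<omega> powr e)"
    using assms by (rule landau_o.big.mult_left)
  moreover have "(\<lambda>\<omega>. f \<omega> / \<omega>) = (\<lambda>\<omega>. inverse \<omega> * f \<omega>)"
    by (simp add: divide_inverse_commute)
  ultimately show ?thesis by simp
qed

lemma bessel_Jr_bigo:
  assumes "c > 0"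
  shows "(\<lambda>\<omega>. bessel_Jr mu (\<omega> * c)) \<in> O(\<lambda>\<omega>. \<omega> powr (-1/2))"
proof -
  obtain C where "\<forall>\<^sub>F \<omega> in at_top. \<forall>x\<in>{c}. \<bar>bessel_Jr mu (\<omega> * id x)\<bar> \<le> C * \<omega> powr (-1/2)"
    using bessel_Jr_uniform_decay[of c "{c}" id mu] assms by auto
  then show ?thesis by (intro bigoI[of _ C]) (auto elim!: eventually_mono)
qed

lemma bessel_integral_decay:
  fixes a b :: real
  assumes "a < b"
    and G_pos: "\<forall>x\<in>{a..b}. G x > 0"
    and G_deriv: "\<forall>x\<in>{a..b}. (G has_real_derivative G' x) (at x within {a..b})"
    and G'_nz: "\<forall>x\<in>{a..b}. G' x \<noteq> 0"
    and G_smooth: "\<And>n. Ck_flat a b n 0 G" and G'_smooth: "\<And>n. Ck_flat a b n 0 G'"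
    and h: "Ck_flat a b (Suc m) m h"
  shows "(\<lambda>\<omega>. integral {a..b} (\<lambda>x. h x * bessel_Jr mu (\<omega> * G x))) \<in> O(\<lambda>\<omega>. \<omega> powr (- real m - 3/2))"
  using h
proof (induction m arbitrary: mu h)
  case 0
  obtain h1 v where h1: "Ck_flat a b 0 (0 - 1) h1" and "0 < (0::nat) \<Longrightarrow> v a = 0 \<and> v b = 0"
    and eq: "\<And>\<omega>. \<omega> > 0 \<Longrightarrow> integral {a..b} (\<lambda>x. h x * bessel_Jr mu (\<omega> * G x)) =
      (v b * bessel_Jr (mu + 1) (\<omega> * G b) - v a * bessel_Jr (mu + 1) (\<omega> * G a)
       + integral {a..b} (\<lambda>x. h1 x * bessel_Jr (mu + 1) (\<omega> * G x))) / \<omega>"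
    by (rule bessel_integral_reduction[OF assms(1-6) "0.prems", where mu = mu]) blast
  have G_cont: "continuous_on {a..b} G" by (rule Ck_flat_continuous_on[OF G_smooth])
  have "G a > 0" "G b > 0" using G_pos \<open>a < b\<close> by auto
  have "(\<lambda>\<omega>. v a * bessel_Jr (mu + 1) (\<omega> * G a)) \<in> O(\<lambda>\<omega>. \<omega> powr (-1/2))"
    and "(\<lambda>\<omega>. v b * bessel_Jr (mu + 1) (\<omega> * G b)) \<in> O(\<lambda>\<omega>. \<omega> powr (-1/2))"
    using bessel_Jr_bigo[OF \<open>G a > 0\<close>] bessel_Jr_bigo[OF \<open>G b > 0\<close>] by simp_all
  moreover have "(\<lambda>\<omega>. integral {a..b} (\<lambda>x. h1 x * bessel_Jr (mu + 1) (\<omega> * G x))) \<in> O(\<lambda>\<omega>. \<omega> powr (-1/2))"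
    using \<open>a < b\<close> h1 G_pos G_cont by (intro bessel_integral_bigo_sqrt) auto
  ultimately have num: "(\<lambda>\<omega>. v b * bessel_Jr (mu + 1) (\<omega> * G b) - v a * bessel_Jr (mu + 1) (\<omega> * G a)
       + integral {a..b} (\<lambda>x. h1 x * bessel_Jr (mu + 1) (\<omega> * G x))) \<in> O(\<lambda>\<omega>. \<omega> powr (-1/2))"
    by (intro sum_in_bigo(1) sum_in_bigo(2))
  have e: "-1/2 - 1 = - real 0 - 3/2" by simp
  from bigo_divide_powr[OF num, unfolded e]
  have bound: "(\<lambda>\<omega>. (v b * bessel_Jr (mu + 1) (\<omega> * G b) - v a * bessel_Jr (mu + 1) (\<omega> * G a)
       + integral {a..b} (\<lambda>x. h1 x * bessel_Jr (mu + 1) (\<omega> * G x))) / \<omega>)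
      \<in> O(\<lambda>\<omega>. \<omega> powr (- real 0 - 3/2))" .
  have "\<forall>\<^sub>F \<omega> in at_top. integral {a..b} (\<lambda>x. h x * bessel_Jr mu (\<omega> * G x)) =
      (v b * bessel_Jr (mu + 1) (\<omega> * G b) - v a * bessel_Jr (mu + 1) (\<omega> * G a)
       + integral {a..b} (\<lambda>x. h1 x * bessel_Jr (mu + 1) (\<omega> * G x))) / \<omega>"
    using eventually_gt_at_top[of 0] by (rule eventually_mono) (rule eq)
  from landau_o.big.in_cong[OF this] bound show ?case by blast
next
  case (Suc m)
  obtain h1 v where h1: "Ck_flat a b (Suc m) (Suc m - 1) h1" and v: "0 < Suc m \<Longrightarrow> v a = 0 \<and> v b = 0"
    and eq: "\<And>\<omega>. \<omega> > 0 \<Longrightarrow> integral {a..b} (\<lambda>x. h x * bessel_Jr mu (\<omega> * G x)) =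
      (v b * bessel_Jr (mu + 1) (\<omega> * G b) - v a * bessel_Jr (mu + 1) (\<omega> * G a)
       + integral {a..b} (\<lambda>x. h1 x * bessel_Jr (mu + 1) (\<omega> * G x))) / \<omega>"
    by (rule bessel_integral_reduction[OF assms(1-6) Suc.prems, where mu = mu]) blast
  have e: "- real m - 3/2 - 1 = - real (Suc m) - 3/2" by simp
  from h1 have "Ck_flat a b (Suc m) m h1" by simp
  from bigo_divide_powr[OF Suc.IH[OF this], unfolded e]
  have bound: "(\<lambda>\<omega>. integral {a..b} (\<lambda>x. h1 x * bessel_Jr (mu + 1) (\<omega> * G x)) / \<omega>)
      \<in> O(\<lambda>\<omega>. \<omega> powr (- real (Suc m) - 3/2))" .
  have "\<forall>\<^sub>F \<omega> in at_top. integral {a..b} (\<lambda>x. h x * bessel_Jr mu (\<omega> * G x)) =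
      integral {a..b} (\<lambda>x. h1 x * bessel_Jr (mu + 1) (\<omega> * G x)) / \<omega>"
    using eventually_gt_at_top[of 0] by (rule eventually_mono) (simp add: eq v)
  from landau_o.big.in_cong[OF this] bound show ?case by blast
qed

lemma continuous_on_nonzero_imp_const_sign:
  fixes g :: "real \<Rightarrow> real"
  assumes "a \<le> b" and g_cont: "continuous_on {a..b} g" and g_nz: "\<forall>x\<in>{a..b}. g x \<noteq> 0"
  obtains \<epsilon> where "\<epsilon> = 1 \<or> \<epsilon> = -1" "\<forall>x\<in>{a..b}. \<epsilon> * g x > 0"
proof -
  define \<epsilon> where "\<epsilon> = sgn (g a)"
  have "g a \<noteq> 0" using g_nz \<open>a \<le> b\<close> by auto
  then have \<epsilon>: "\<epsilon> = 1 \<or> \<epsilon> = -1" and "\<epsilon> * g a > 0"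
    unfolding \<epsilon>_def by (auto simp: sgn_real_def)
  have pos: "\<epsilon> * g x > 0" if x: "x \<in> {a..b}" for x
  proof (rule ccontr)
    assume "\<not> \<epsilon> * g x > 0"
    moreover have "continuous_on {a..x} (\<lambda>t. \<epsilon> * g t)"
      using x by (intro continuous_on_mult_left continuous_on_subset[OF g_cont]) auto
    ultimately obtain y where "a \<le> y" "y \<le> x" "\<epsilon> * g y = 0"
      using IVT2'[of "\<lambda>t. \<epsilon> * g t" x 0 a] \<open>\<epsilon> * g a > 0\<close> x by auto
    then show False using g_nz \<epsilon> x by auto
  qed
  show ?thesis using pos by (intro that[OF \<epsilon>] ballI)
qed

lemma bessel_H_diff_bigo:
  fixes Dg E :: "nat \<Rightarrow> real \<Rightarrow> real" and a b :: real
  assumes "a < b"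
    and g_smooth: "smooth_derivs Dg {a..b}"
    and g_nz: "\<forall>t\<in>{a..b}. Dg 0 t \<noteq> 0" and g'_nz: "\<forall>t\<in>{a..b}. Dg 1 t \<noteq> 0"
    and E_smooth: "smooth_derivs E {a..b}" and E_flat: "\<forall>i<m. E i a = 0 \<and> E i b = 0"
    and f_cont: "continuous_on {a..b} f" and p_cont: "continuous_on {a..b} p"
    and E: "\<forall>t\<in>{a..b}. f t - p t = E 0 t"
  shows "(\<lambda>\<omega>. norm (bessel_H nu a b (Dg 0) f \<omega> - bessel_H nu a b (Dg 0) p \<omega>))
           \<in> O(\<lambda>\<omega>. \<omega> powr (- real m - 3/2))"
proof -
  have g_cont: "continuous_on {a..b} (Dg 0)" by (rule smooth_derivs_continuous_on[OF g_smooth])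
  obtain \<epsilon> where \<epsilon>: "\<epsilon> = 1 \<or> \<epsilon> = -1" and G_pos: "\<forall>t\<in>{a..b}. \<epsilon> * Dg 0 t > 0"
    using continuous_on_nonzero_imp_const_sign[OF _ g_cont g_nz] \<open>a < b\<close> by auto
  define DG where "DG k t = \<epsilon> * Dg k t" for k t
  have DG_smooth: "smooth_derivs DG {a..b}"
    using g_smooth unfolding smooth_derivs_def DG_def by (auto intro: DERIV_cmult)
  have "(\<lambda>\<omega>. integral {a..b} (\<lambda>t. E 0 t * bessel_Jr nu (\<omega> * DG 0 t))) \<in> O(\<lambda>\<omega>. \<omega> powr (- real m - 3/2))"
  proof (rule bessel_integral_decay[OF \<open>a < b\<close>])
    show "\<forall>t\<in>{a..b}. DG 0 t > 0" using G_pos unfolding DG_def .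
    show "\<forall>t\<in>{a..b}. (DG 0 has_real_derivative DG 1 t) (at t within {a..b})"
      using DG_smooth unfolding smooth_derivs_def by simp
    show "\<forall>t\<in>{a..b}. DG 1 t \<noteq> 0" using g'_nz \<epsilon> unfolding DG_def by auto
    show "Ck_flat a b n 0 (DG 0)" "Ck_flat a b n 0 (DG 1)" for n
      using smooth_derivs_imp_Ck_flat[OF DG_smooth] smooth_derivs_imp_Ck_flat[OF smooth_derivs_Suc[OF DG_smooth]]
      by auto
    show "Ck_flat a b (Suc m) m (E 0)" by (rule smooth_derivs_imp_Ck_flat[OF E_smooth E_flat])
  qed
  then have bound: "(\<lambda>\<omega>. \<bar>integral {a..b} (\<lambda>t. E 0 t * bessel_Jr nu (\<omega> * DG 0 t))\<bar>)
      \<in> O(\<lambda>\<omega>. \<omega> powr (- real m - 3/2))"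
    by (simp only: landau_o.big.abs_in_iff)
  have ev: "\<forall>\<^sub>F \<omega> in at_top. norm (bessel_H nu a b (Dg 0) f \<omega> - bessel_H nu a b (Dg 0) p \<omega>) =
      \<bar>integral {a..b} (\<lambda>t. E 0 t * bessel_Jr nu (\<omega> * DG 0 t))\<bar>"
  proof (rule eventually_mono[OF eventually_gt_at_top[of 0]])
    fix \<omega> :: real assume "\<omega> > 0"
    have "integral {a..b} (\<lambda>t. (f t - p t) * bessel_Jr nu (\<omega> * (\<epsilon> * Dg 0 t))) =
        integral {a..b} (\<lambda>t. E 0 t * bessel_Jr nu (\<omega> * DG 0 t))"
      by (rule integral_cong) (simp add: DG_def E)
    with norm_bessel_H_diff[OF \<open>\<omega> > 0\<close> \<epsilon> G_pos g_cont f_cont p_cont]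
    show "norm (bessel_H nu a b (Dg 0) f \<omega> - bessel_H nu a b (Dg 0) p \<omega>) =
        \<bar>integral {a..b} (\<lambda>t. E 0 t * bessel_Jr nu (\<omega> * DG 0 t))\<bar>" by simp
  qed
  show ?thesis by (rule landau_o.big.in_cong[OF ev, THEN iffD2, OF bound])
qed

theorem theorem2p5:
  fixes nu a b :: real
    and Df Dg Dp :: "nat \<Rightarrow> real \<Rightarrow> real"
    and d :: nat and x :: "nat \<Rightarrow> real" and mult :: "nat \<Rightarrow> nat"
    and c :: "nat \<Rightarrow> real" and m :: nat
  defines "f \<equiv> Df 0"
    and "g \<equiv> Dg 0"
    and "p \<equiv> (\<lambda>t. \<Sum>k<(\<Sum>i\<le>d. mult i). c k * (Dg 1 t * Dg 0 t ^ k))"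
  assumes "a < b"
    and f_smooth: "smooth_derivs Df {a..b}"
    and g_smooth: "smooth_derivs Dg {a..b}"
    and g_nz: "\<forall>t\<in>{a..b}. g t \<noteq> 0"
    and g'_nz: "\<forall>t\<in>{a..b}. Dg 1 t \<noteq> 0"
    and x0: "x 0 = a" and xd: "x d = b"
    and x_mono: "\<forall>k<d. x k < x (Suc k)"
    and mult_pos: "\<forall>k\<le>d. mult k \<ge> 1"
    and p_derivs: "\<forall>t\<in>{a..b}. Dp 0 t = p t" "smooth_derivs Dp {a..b}"
    and interp: "\<forall>k\<le>d. \<forall>j<mult k. Dp j (x k) = Df j (x k)"
    and m_pos: "m \<ge> 1"
    and m_ends: "mult 0 \<ge> m" "mult d \<ge> m"
  shows "(\<lambda>\<omega>. norm (bessel_H nu a b g f \<omega> - bessel_H nu a b g p \<omega>))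
           \<in> O[at_top](\<lambda>\<omega>. \<omega> powr (- real m - 3/2))"
proof -
  have "Dp i (x 0) = Df i (x 0)" "Dp i (x d) = Df i (x d)" if "i < m" for i
    using interp m_ends that by auto
  then have flat: "\<forall>i<m. Df i a - Dp i a = 0 \<and> Df i b - Dp i b = 0"
    unfolding x0 xd by simp
  have "continuous_on {a..b} (Dp 0)" by (rule smooth_derivs_continuous_on[OF p_derivs(2)])
  then have p_cont: "continuous_on {a..b} p"
    using continuous_on_cong[of "{a..b}" "{a..b}" "Dp 0" p] p_derivs(1) by simp
  show ?thesis
    unfolding f_def g_def
    by (rule bessel_H_diff_bigo[OF \<open>a < b\<close> g_smooth g_nz[unfolded g_def] g'_nz
          smooth_derivs_diff[OF f_smooth p_derivs(2)] flat smooth_derivs_continuous_on[OF f_smooth] p_cont])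
       (use p_derivs(1) in auto)
qed

end
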